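(* Let $Y=f(\boldsymbol X^\intercal\boldsymbol\beta,\varepsilon)$ with $\boldsymbol X\sim N_p(0,\mathbb I_p)$, $\varepsilon$ independent of $\boldsymbol X$, and $(f,\varepsilon,\boldsymbol\beta)\in\mathcal F_A$ for some $A>0$. Then for every $j\in\operatorname{supp}(\boldsymbol\beta)$, $$\frac As\le\operatorname{Var}(\mathfrak m_j(Y))\le\frac1s,$$ and $\operatorname{Var}(\mathfrak m_j(Y))=0$ for $j\notin\operatorname{supp}(\boldsymbol\beta)$.
   Context: $\mathfrak m_j(y)=\mathbb E[\boldsymbol X^j\mid Y=y]$. The class $\mathcal F_A$ consists of triples $(f,\varepsilon,\boldsymbol\beta)$ such that $\operatorname{Var}(\mathbb E[Z\mid f(Z,\varepsilon)])\ge A$ where $Z\sim N(0,1)$ is independent of $\varepsilon$; $\boldsymbol\beta\in\mathbb R^p$ has exactly $s$ nonzero entries, each in $\{\pm1/\sqrt s\}$; and $(f,\varepsilon)$ is sliced stable: there exist $0<l<1<K$, $M>0$ such that for every integer $H>M$ and every partition $-\infty=a_1<\dots<a_{H+1}=+\infty$ with $l/H\le\mathbb P(a_h<Y\le a_{h+1})\le K/H$ for all $h$, there are $0\le\kappa<1$, $C>0$ (depending on $l,K,M$) with $\sum_{h=1}^H\operatorname{Var}[\mathfrak m_j(Y)\mid a_h<Y\le a_{h+1}]\le CH^{\kappa}\operatorname{Var}[\mathfrak m_j(Y)]$ for all $j\in\operatorname{supp}(\boldsymbol\beta)$. *)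

theory Defs
  imports "HOL-Probability.Probability"
begin

definition Var :: "'a measure \<Rightarrow> ('a \<Rightarrow> real) \<Rightarrow> real" where
  "Var M V = (\<integral>x. (V x - (\<integral>y. V y \<partial>M))\<^sup>2 \<partial>M)"

definition cVar_event :: "'a measure \<Rightarrow> 'a set \<Rightarrow> ('a \<Rightarrow> real) \<Rightarrow> real" where
  "cVar_event M B V =
     (let c = (\<integral>y. indicator B y * V y \<partial>M) / measure M B
      in (\<integral>x. indicator B x * (V x - c)\<^sup>2 \<partial>M) / measure M B)"

text \<open>Conditional expectation E[V | Y] as a random variable (i.e. m(Y)).\<close>
definition cond_exp_given :: "'a measure \<Rightarrow> ('a \<Rightarrow> real) \<Rightarrow> ('a \<Rightarrow> real) \<Rightarrow> ('a \<Rightarrow> real)" where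
  "cond_exp_given M Y V = real_cond_exp M (vimage_algebra (space M) Y borel) V"

definition slice :: "'a measure \<Rightarrow> ('a \<Rightarrow> real) \<Rightarrow> (nat \<Rightarrow> ereal) \<Rightarrow> nat \<Rightarrow> 'a set" where
  "slice M Y a h = {\<omega> \<in> space M. a h < ereal (Y \<omega>) \<and> ereal (Y \<omega>) \<le> a (Suc h)}"

definition sliced_stable ::
  "'a measure \<Rightarrow> nat \<Rightarrow> (nat \<Rightarrow> 'a \<Rightarrow> real) \<Rightarrow> ('a \<Rightarrow> real) \<Rightarrow> (nat \<Rightarrow> real) \<Rightarrow> bool" where
  "sliced_stable M p X Y \<beta> \<longleftrightarrow>
     (\<exists>l K Mc::real. 0 < l \<and> l < 1 \<and> 1 < K \<and> 0 < Mc \<and>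
       (\<exists>\<kappa> C::real. 0 \<le> \<kappa> \<and> \<kappa> < 1 \<and> 0 < C \<and>
         (\<forall>H::nat. real H > Mc \<longrightarrow>
           (\<forall>a::nat \<Rightarrow> ereal.
              a 1 = -\<infinity> \<and> a (H+1) = \<infinity> \<and> (\<forall>h\<in>{1..H}. a h < a (Suc h)) \<and>
              (\<forall>h\<in>{1..H}. l / real H \<le> measure M (slice M Y a h) \<and>
                            measure M (slice M Y a h) \<le> K / real H)
            \<longrightarrow> (\<forall>j<p. \<beta> j \<noteq> 0 \<longrightarrow>
                  (\<Sum>h=1..H. cVar_event M (slice M Y a h) (cond_exp_given M Y (X j)))
                    \<le> C * real H powr \<kappa> * Var M (cond_exp_given M Y (X j)))))))"

definition in_F ::
  "real \<Rightarrow> nat \<Rightarrow> nat \<Rightarrow> 'a measure \<Rightarrow> 'e measure \<Rightarrow> (nat \<Rightarrow> 'a \<Rightarrow> real) \<Rightarrow>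
   (real \<Rightarrow> 'e \<Rightarrow> real) \<Rightarrow> ('a \<Rightarrow> 'e) \<Rightarrow> (nat \<Rightarrow> real) \<Rightarrow> bool" where
  "in_F A p s M N X f \<epsilon> \<beta> \<longleftrightarrow>
     (\<forall>Z. distributed M lborel Z std_normal_density \<and> Z \<in> borel_measurable M \<and>
          prob_space.indep_set M (sets (vimage_algebra (space M) Z borel)) (sets (vimage_algebra (space M) \<epsilon> N))
          \<longrightarrow> Var M (cond_exp_given M (\<lambda>\<omega>. f (Z \<omega>) (\<epsilon> \<omega>)) Z) \<ge> A) \<and>
     card {j. j < p \<and> \<beta> j \<noteq> 0} = s \<and>
     (\<forall>j<p. \<beta> j \<noteq> 0 \<longrightarrow> \<beta> j = 1 / sqrt (real s) \<or> \<beta> j = - 1 / sqrt (real s)) \<and>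
     sliced_stable M p X (\<lambda>\<omega>. f (\<Sum>j<p. X j \<omega> * \<beta> j) (\<epsilon> \<omega>)) \<beta>"

end

theory Submission
  imports Defs
begin

text \<open>Since \<open>\<parallel>\<beta>\<parallel> = 1\<close>, the index \<open>Z = X\<^sup>T\<beta>\<close> is standard normal and \<open>Y\<close> depends on \<open>X\<close> only
  through \<open>Z\<close>. A signed permutation of the coordinates that fixes \<open>\<beta>\<close> preserves the joint law of
  \<open>(X, \<epsilon>)\<close> and leaves \<open>Y\<close> unchanged; flipping one sign shows \<open>m\<^sub>j = 0\<close> off the support, and a
  signed transposition shows that \<open>\<beta>\<^sub>j m\<^sub>j\<close> is the same for all \<open>j\<close> in the support. Summing,
  \<open>E[Z | Y] = s \<beta>\<^sub>j m\<^sub>j\<close>, so \<open>Var m\<^sub>j = Var E[Z | Y] / s\<close>. The class \<open>F\<^sub>A\<close> bounds \<open>Var E[Z | Y]\<close>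
  below by \<open>A\<close>, and conditional Jensen bounds it above by \<open>E Z\<^sup>2 = 1\<close>.\<close>

lemma sets_vimage_algebra_comp_subset:
  assumes "V \<in> space M \<rightarrow> space D" and "h \<in> measurable D T"
  shows "sets (vimage_algebra (space M) (\<lambda>\<omega>. h (V \<omega>)) T) \<subseteq> sets (vimage_algebra (space M) V D)"
  using measurable_comp[OF measurable_vimage_algebra1[OF assms(1)] assms(2)]
  by (intro sets_image_in_sets) (simp_all add: comp_def)

lemma (in prob_space) indep_set_mono_left:
  assumes "indep_set A B" and "A' \<subseteq> A"
  shows "indep_set A' B"
  using assms indep_sets_mono_sets[of "case_bool A B" UNIV "case_bool A' B"]
  unfolding indep_set_def by (auto split: bool.split)

lemma (in prob_space) distr_pair_eq_pair_measure_if_indep_set: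
  assumes "W \<in> measurable M D" and "e \<in> measurable M N"
    and "indep_set (sets (vimage_algebra (space M) W D)) (sets (vimage_algebra (space M) e N))"
  shows "distr M (D \<Otimes>\<^sub>M N) (\<lambda>\<omega>. (W \<omega>, e \<omega>)) = distr M D W \<Otimes>\<^sub>M distr M N e"
proof -
  interpret D: prob_space "distr M D W" using assms(1) by (rule prob_space_distr)
  interpret N: prob_space "distr M N e" using assms(2) by (rule prob_space_distr)
  show ?thesis
  proof (rule pair_measure_eqI[symmetric])
    fix A B assume A: "A \<in> sets (distr M D W)" and B: "B \<in> sets (distr M N e)"
    have WA: "W -` A \<inter> space M \<in> sets (vimage_algebra (space M) W D)"
      and eB: "e -` B \<inter> space M \<in> sets (vimage_algebra (space M) e N)"
      using A B by (simp_all add: in_vimage_algebra)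
    have "emeasure (distr M (D \<Otimes>\<^sub>M N) (\<lambda>\<omega>. (W \<omega>, e \<omega>))) (A \<times> B)
        = emeasure M ((\<lambda>\<omega>. (W \<omega>, e \<omega>)) -` (A \<times> B) \<inter> space M)"
      using A B by (intro emeasure_distr measurable_Pair assms(1,2)) simp
    also have "(\<lambda>\<omega>. (W \<omega>, e \<omega>)) -` (A \<times> B) \<inter> space M = (W -` A \<inter> space M) \<inter> (e -` B \<inter> space M)"
      by auto
    also have "emeasure M \<dots> = emeasure M (W -` A \<inter> space M) * emeasure M (e -` B \<inter> space M)"
      using indep_setD[OF assms(3) WA eB] by (simp add: emeasure_eq_measure ennreal_mult)
    also have "\<dots> = emeasure (distr M D W) A * emeasure (distr M N e) B"
      using assms(1,2) A B by (simp add: emeasure_distr)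
    finally show "emeasure (distr M D W) A * emeasure (distr M N e) B
        = emeasure (distr M (D \<Otimes>\<^sub>M N) (\<lambda>\<omega>. (W \<omega>, e \<omega>))) (A \<times> B)" by simp
  qed (simp_all add: D.sigma_finite_measure_axioms N.sigma_finite_measure_axioms)
qed

lemma (in prob_space) indep_sets_reindex:
  assumes indep: "indep_sets F J" and inj: "inj_on \<pi> I" and into: "\<pi> ` I \<subseteq> J"
  shows "indep_sets (\<lambda>i. F (\<pi> i)) I"
proof (rule indep_setsI)
  show "F (\<pi> i) \<subseteq> events" if "i \<in> I" for i
    using indep into that unfolding indep_sets_def by blast
  fix A K assume K: "K \<noteq> {}" "K \<subseteq> I" "finite K" and A: "\<forall>k\<in>K. A k \<in> F (\<pi> k)"
  have inj_K: "inj_on \<pi> K" using inj K(2) by (rule inj_on_subset)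
  define B where "B = (\<lambda>l. A (the_inv_into K \<pi> l))"
  have B\<pi>: "B (\<pi> k) = A k" if "k \<in> K" for k
    using the_inv_into_f_f[OF inj_K that] by (simp add: B_def)
  have "\<forall>l\<in>\<pi> ` K. B l \<in> F l" using A B\<pi> by simp
  then have "prob (\<Inter>l\<in>\<pi> ` K. B l) = (\<Prod>l\<in>\<pi> ` K. prob (B l))"
    using K into by (intro indep_setsD[OF indep]) auto
  then show "prob (\<Inter>k\<in>K. A k) = (\<Prod>k\<in>K. prob (A k))"
    by (simp add: prod.reindex[OF inj_K] image_image B\<pi> cong: INF_cong)
qed

lemma (in prob_space) indep_vars_reindex:
  assumes "indep_vars M' X J" and "inj_on \<pi> I" and "\<pi> ` I \<subseteq> J"
  shows "indep_vars (\<lambda>i. M' (\<pi> i)) (\<lambda>i. X (\<pi> i)) I"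
  using assms indep_sets_reindex[of "\<lambda>i. {X i -` A \<inter> space M | A. A \<in> sets (M' i)}" J \<pi> I]
  unfolding indep_vars_def2 by auto

lemma (in prob_space) distr_restrict_eq_PiM_density:
  assumes "I \<noteq> {}" and "indep_vars (\<lambda>_. borel) W I"
    and "\<And>i. i \<in> I \<Longrightarrow> distributed M lborel (W i) g"
  shows "distr M (PiM I (\<lambda>_. borel)) (\<lambda>\<omega>. \<lambda>i\<in>I. W i \<omega>) = PiM I (\<lambda>_. density lborel g)"
proof -
  have rv: "random_variable borel (W i)" if "i \<in> I" for i
    using distributed_measurable[OF assms(3)[OF that]] by simp
  have "distr M borel (W i) = density lborel g" if "i \<in> I" for i
  proof -
    have "distr M borel (W i) = distr M lborel (W i)" by (rule distr_cong) auto
    then show ?thesis using distributed_distr_eq_density[OF assms(3)[OF that]] by simp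
  qed
  then have "PiM I (\<lambda>i. distr M borel (W i)) = PiM I (\<lambda>_. density lborel g)"
    by (intro PiM_cong) auto
  then show ?thesis
    using assms(2) indep_vars_iff_distr_eq_PiM'[OF assms(1) rv] by simp
qed

lemma (in prob_space) distr_iid_pair:
  assumes "I \<noteq> {}" and "indep_vars (\<lambda>_. borel) W I"
    and "\<And>i. i \<in> I \<Longrightarrow> distributed M lborel (W i) g"
    and "e \<in> measurable M N"
    and "indep_set (sets (vimage_algebra (space M) (\<lambda>\<omega>. \<lambda>i\<in>I. W i \<omega>) (PiM I (\<lambda>_. borel))))
           (sets (vimage_algebra (space M) e N))"
  shows "distr M (PiM I (\<lambda>_. borel) \<Otimes>\<^sub>M N) (\<lambda>\<omega>. (\<lambda>i\<in>I. W i \<omega>, e \<omega>))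
       = PiM I (\<lambda>_. density lborel g) \<Otimes>\<^sub>M distr M N e"
proof -
  have "(\<lambda>\<omega>. \<lambda>i\<in>I. W i \<omega>) \<in> measurable M (PiM I (\<lambda>_. borel))"
    using distributed_measurable[OF assms(3)] by (intro measurable_restrict) simp
  then show ?thesis
    using distr_pair_eq_pair_measure_if_indep_set[OF _ assms(4,5)]
      distr_restrict_eq_PiM_density[OF assms(1-3)] by simp
qed

lemma (in prob_space) std_normal_linear_combination:
  assumes "finite I" and indep: "indep_vars (\<lambda>_. borel) W I"
    and normal: "\<And>i. i \<in> I \<Longrightarrow> distributed M lborel (W i) std_normal_density"
    and unit: "(\<Sum>i\<in>I. (a i)\<^sup>2) = 1"
  shows "distributed M lborel (\<lambda>\<omega>. \<Sum>i\<in>I. a i * W i \<omega>) std_normal_density"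
proof -
  define S where "S = {i \<in> I. a i \<noteq> 0}"
  have S: "finite S" "S \<subseteq> I" using assms(1) by (auto simp: S_def)
  have sum_S: "(\<Sum>i\<in>I. g i) = (\<Sum>i\<in>S. g i)" if "\<And>i. a i = 0 \<Longrightarrow> g i = 0" for g :: "_ \<Rightarrow> real"
    using assms(1) that by (intro sum.mono_neutral_right) (auto simp: S_def)
  have "S \<noteq> {}" using unit sum_S[of "\<lambda>i. (a i)\<^sup>2"] by auto
  moreover have "distributed M lborel (\<lambda>\<omega>. a i * W i \<omega>) (normal_density 0 \<bar>a i\<bar>)" if "i \<in> S" for i
    using normal_density_affine[OF normal, of i "a i" 0] that by (auto simp: S_def)
  moreover have "indep_vars (\<lambda>_. borel) (\<lambda>i \<omega>. a i * W i \<omega>) S"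
    using indep_vars_compose2[OF indep_vars_subset[OF indep S(2)], of "\<lambda>i x. a i * x" "\<lambda>_. borel"] by simp
  ultimately have "distributed M lborel (\<lambda>\<omega>. \<Sum>i\<in>S. a i * W i \<omega>)
      (normal_density (\<Sum>i\<in>S. 0) (sqrt (\<Sum>i\<in>S. \<bar>a i\<bar>\<^sup>2)))"
    using S(1) by (intro sum_indep_normal) (auto simp: S_def)
  moreover have "(\<Sum>i\<in>S. \<bar>a i\<bar>\<^sup>2) = 1" using unit sum_S[of "\<lambda>i. (a i)\<^sup>2"] by simp
  moreover have "(\<lambda>\<omega>. \<Sum>i\<in>I. a i * W i \<omega>) = (\<lambda>\<omega>. \<Sum>i\<in>S. a i * W i \<omega>)"
    by (intro ext sum_S) simp
  ultimately show ?thesis by simp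
qed

lemma sum_signed_perm:
  fixes c \<beta> x :: "nat \<Rightarrow> real"
  assumes "bij_betw \<pi> {..<p} {..<p}" and "\<And>i. i < p \<Longrightarrow> c i * \<beta> i = \<beta> (\<pi> i)"
  shows "(\<Sum>i<p. c i * x (\<pi> i) * \<beta> i) = (\<Sum>i<p. x i * \<beta> i)"
proof -
  have "(\<Sum>i<p. c i * x (\<pi> i) * \<beta> i) = (\<Sum>i<p. x (\<pi> i) * \<beta> (\<pi> i))"
    using assms(2) by (intro sum.cong refl) (metis lessThan_iff mult.assoc mult.commute)
  also have "\<dots> = (\<Sum>i<p. x i * \<beta> i)"
    using sum.reindex_bij_betw[OF assms(1), of "\<lambda>k. x k * \<beta> k"] by simp
  finally show ?thesis .
qed

lemma unit_sign_vector:
  fixes \<beta> :: "nat \<Rightarrow> real"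
  assumes card: "card {i. i < p \<and> \<beta> i \<noteq> 0} = s"
    and sign: "\<forall>i<p. \<beta> i \<noteq> 0 \<longrightarrow> \<beta> i = 1 / sqrt (real s) \<or> \<beta> i = - 1 / sqrt (real s)"
    and j: "j < p" "\<beta> j \<noteq> 0"
  shows "0 < s" and "(\<Sum>i<p. (\<beta> i)\<^sup>2) = 1"
    and "\<And>i. i < p \<Longrightarrow> \<beta> i \<noteq> 0 \<Longrightarrow> \<bar>\<beta> i\<bar> = \<bar>\<beta> j\<bar>"
    and "(real s * \<beta> j)\<^sup>2 = real s"
proof -
  let ?S = "{i. i < p \<and> \<beta> i \<noteq> 0}"
  have "0 < card ?S" using j by (subst card_gt_0_iff) auto
  then show s: "0 < s" using card by simp
  have sq: "(\<beta> i)\<^sup>2 = 1 / real s" if "i < p" "\<beta> i \<noteq> 0" for i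
  proof -
    have "(\<beta> i)\<^sup>2 = (1 / sqrt (real s))\<^sup>2" using sign that by auto
    then show ?thesis using s by (simp add: power_divide)
  qed
  have "(\<Sum>i<p. (\<beta> i)\<^sup>2) = (\<Sum>i\<in>?S. 1 / real s)"
    using sq by (intro sum.mono_neutral_cong_right) auto
  then show "(\<Sum>i<p. (\<beta> i)\<^sup>2) = 1" using card s by simp
  show "\<bar>\<beta> i\<bar> = \<bar>\<beta> j\<bar>" if "i < p" "\<beta> i \<noteq> 0" for i
  proof -
    have "sqrt ((\<beta> i)\<^sup>2) = sqrt ((\<beta> j)\<^sup>2)" using sq[OF that] sq[OF j] by simp
    then show ?thesis by simp
  qed
  have "(real s * \<beta> j)\<^sup>2 = real s * (real s * (\<beta> j)\<^sup>2)" by (simp add: power2_eq_square)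
  then show "(real s * \<beta> j)\<^sup>2 = real s" using sq[OF j] s by simp
qed

lemma Var_cong_AE:
  assumes "AE x in M. V x = W x" and "V \<in> borel_measurable M" and "W \<in> borel_measurable M"
  shows "Var M V = Var M W"
proof -
  have "(\<integral>y. V y \<partial>M) = (\<integral>y. W y \<partial>M)" using assms by (intro integral_cong_AE) auto
  then show ?thesis unfolding Var_def using assms by (intro integral_cong_AE) auto
qed

lemma Var_cmult: "Var M (\<lambda>x. a * V x) = a\<^sup>2 * Var M V"
proof -
  have "(\<lambda>x. (a * V x - (\<integral>y. a * V y \<partial>M))\<^sup>2) = (\<lambda>x. a\<^sup>2 * (V x - (\<integral>y. V y \<partial>M))\<^sup>2)"
    by (auto simp: fun_eq_iff power2_eq_square algebra_simps)
  then show ?thesis unfolding Var_def by simp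
qed

lemma (in prob_space) sigma_finite_subalgebra_vimage_algebra:
  assumes "Y \<in> borel_measurable M"
  shows "sigma_finite_subalgebra M (vimage_algebra (space M) Y borel)"
  using sets_image_in_sets[OF refl assms] finite_measure_axioms
  by (intro finite_measure_subalgebra_is_sigma_finite)
     (simp add: finite_measure_subalgebra_def finite_measure_subalgebra_axioms_def subalgebra_def)

lemma (in prob_space) Var_real_cond_exp_le_second_moment:
  assumes "sigma_finite_subalgebra M F" and Z: "integrable M Z" and Z2: "integrable M (\<lambda>x. (Z x)\<^sup>2)"
  shows "Var M (real_cond_exp M F Z) \<le> (\<integral>x. (Z x)\<^sup>2 \<partial>M)"
proof -
  interpret S: sigma_finite_subalgebra M F by fact
  let ?G = "real_cond_exp M F Z" and ?G2 = "real_cond_exp M F (\<lambda>x. (Z x)\<^sup>2)"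
  have jensen: "AE x in M. (?G x)\<^sup>2 \<le> ?G2 x"
    using S.real_cond_exp_jensens_inequality(2)[OF Z _ _ Z2 convex_power2, of "-1" 1] by simp
  have G: "integrable M ?G" and G2: "integrable M ?G2"
    using Z Z2 by (auto intro: S.real_cond_exp_int(1))
  have G_sq: "integrable M (\<lambda>x. (?G x)\<^sup>2)"
    using jensen by (intro Bochner_Integration.integrable_bound[OF G2]) (auto elim: AE_mp)
  have "Var M ?G = (\<integral>x. (?G x)\<^sup>2 \<partial>M) - (\<integral>x. ?G x \<partial>M)\<^sup>2"
    unfolding Var_def by (rule variance_eq[OF G G_sq])
  also have "\<dots> \<le> (\<integral>x. ?G2 x \<partial>M)"
    using integral_mono_AE[OF G_sq G2 jensen] by (smt (verit) zero_le_power2)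
  also have "\<dots> = (\<integral>x. (Z x)\<^sup>2 \<partial>M)" using S.real_cond_exp_int(2)[OF Z2] .
  finally show ?thesis .
qed

lemma (in prob_space) std_normal_moments:
  assumes "distributed M lborel Z std_normal_density"
  shows "integrable M Z" and "integrable M (\<lambda>x. (Z x)\<^sup>2)" and "(\<integral>x. (Z x)\<^sup>2 \<partial>M) = 1"
proof -
  show Z: "integrable M Z"
    using distributed_integrable_var[OF assms] integrable_std_normal_moment[of 1] by simp
  show Z2: "integrable M (\<lambda>x. (Z x)\<^sup>2)"
    using distributed_integrable[OF assms, of "\<lambda>x. x\<^sup>2"] integrable_std_normal_moment[of 2] by simp
  show "(\<integral>x. (Z x)\<^sup>2 \<partial>M) = 1"
    using variance_eq[OF Z Z2] standard_normal_distributed_variance[OF assms]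
      standard_normal_distributed_expectation[OF assms] by simp
qed

locale gaussian_single_index = prob_space M
  for M :: "'a measure" and N :: "'e measure" and X :: "nat \<Rightarrow> 'a \<Rightarrow> real"
    and \<epsilon> :: "'a \<Rightarrow> 'e" and f :: "real \<Rightarrow> 'e \<Rightarrow> real" and p :: nat +
  assumes std_normal_X: "\<And>j. j < p \<Longrightarrow> distributed M lborel (X j) std_normal_density"
    and indep_X: "indep_vars (\<lambda>_. borel) X {..<p}"
    and measurable_\<epsilon> [measurable]: "\<epsilon> \<in> measurable M N"
    and indep_X_\<epsilon>: "indep_set
      (sets (vimage_algebra (space M) (\<lambda>\<omega>. \<lambda>j\<in>{..<p}. X j \<omega>) (PiM {..<p} (\<lambda>_. borel))))
      (sets (vimage_algebra (space M) \<epsilon> N))"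
    and measurable_f [measurable]: "(\<lambda>(z, e). f z e) \<in> borel_measurable (borel \<Otimes>\<^sub>M N)"
begin

definition index :: "(nat \<Rightarrow> real) \<Rightarrow> 'a \<Rightarrow> real" where
  "index \<beta> \<omega> = (\<Sum>i<p. X i \<omega> * \<beta> i)"

definition response :: "(nat \<Rightarrow> real) \<Rightarrow> 'a \<Rightarrow> real" where
  "response \<beta> \<omega> = f (index \<beta> \<omega>) (\<epsilon> \<omega>)"

lemma measurable_X: "i < p \<Longrightarrow> X i \<in> borel_measurable M"
  using distributed_measurable[OF std_normal_X] by simp

lemma measurable_design [measurable]:
  "(\<lambda>\<omega>. \<lambda>i\<in>{..<p}. X i \<omega>) \<in> measurable M (PiM {..<p} (\<lambda>_. borel))"
  using measurable_X by (intro measurable_restrict) simp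

lemma measurable_index [measurable]: "index \<beta> \<in> borel_measurable M"
  unfolding index_def using measurable_X by (intro borel_measurable_sum borel_measurable_times) auto

lemma measurable_response [measurable]: "response \<beta> \<in> borel_measurable M"
  unfolding response_def by measurable

lemma std_normal_index:
  assumes "(\<Sum>i<p. (\<beta> i)\<^sup>2) = 1"
  shows "distributed M lborel (index \<beta>) std_normal_density"
proof -
  have "index \<beta> = (\<lambda>\<omega>. \<Sum>i<p. \<beta> i * X i \<omega>)" by (simp add: fun_eq_iff index_def mult.commute)
  then show ?thesis
    using std_normal_linear_combination[OF finite_lessThan indep_X std_normal_X assms] by simp
qed

lemma indep_set_index_\<epsilon>:
  "indep_set (sets (vimage_algebra (space M) (index \<beta>) borel)) (sets (vimage_algebra (space M) \<epsilon> N))"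
proof (rule indep_set_mono_left[OF indep_X_\<epsilon>])
  let ?h = "\<lambda>x. \<Sum>i<p. x i * \<beta> i"
  have "?h \<in> borel_measurable (PiM {..<p} (\<lambda>_. borel))" by measurable
  then have "sets (vimage_algebra (space M) (\<lambda>\<omega>. ?h (\<lambda>i\<in>{..<p}. X i \<omega>)) borel)
      \<subseteq> sets (vimage_algebra (space M) (\<lambda>\<omega>. \<lambda>i\<in>{..<p}. X i \<omega>) (PiM {..<p} (\<lambda>_. borel)))"
    by (intro sets_vimage_algebra_comp_subset Pi_I measurable_space[OF measurable_design])
  moreover have "(\<lambda>\<omega>. ?h (\<lambda>i\<in>{..<p}. X i \<omega>)) = index \<beta>" by (simp add: fun_eq_iff index_def)
  ultimately show "sets (vimage_algebra (space M) (index \<beta>) borel)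
      \<subseteq> sets (vimage_algebra (space M) (\<lambda>\<omega>. \<lambda>i\<in>{..<p}. X i \<omega>) (PiM {..<p} (\<lambda>_. borel)))"
    by simp
qed

lemma distr_signed_perm_design:
  assumes p: "0 < p" and \<pi>: "bij_betw \<pi> {..<p} {..<p}" and c: "\<And>i. i < p \<Longrightarrow> c i = 1 \<or> c i = -1"
  shows "distr M (PiM {..<p} (\<lambda>_. borel) \<Otimes>\<^sub>M N) (\<lambda>\<omega>. (\<lambda>i\<in>{..<p}. c i * X (\<pi> i) \<omega>, \<epsilon> \<omega>))
       = distr M (PiM {..<p} (\<lambda>_. borel) \<Otimes>\<^sub>M N) (\<lambda>\<omega>. (\<lambda>i\<in>{..<p}. X i \<omega>, \<epsilon> \<omega>))"
proof -
  let ?D = "PiM {..<p} (\<lambda>_. borel :: real measure)"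
  have \<pi>_lt: "\<pi> i < p" if "i < p" for i using \<pi> that by (auto simp: bij_betw_def)
  define h where "h = (\<lambda>x :: nat \<Rightarrow> real. \<lambda>i\<in>{..<p}. c i * x (\<pi> i))"
  have h: "h \<in> measurable ?D ?D"
    unfolding h_def using \<pi>_lt by (intro measurable_restrict) (simp add: measurable_component_singleton)
  have normal: "distributed M lborel (\<lambda>\<omega>. c i * X (\<pi> i) \<omega>) std_normal_density" if "i < p" for i
    using normal_density_affine[OF std_normal_X[OF \<pi>_lt[OF that]], of "c i" 0] c[OF that] by auto
  have indep: "indep_vars (\<lambda>_. borel) (\<lambda>i \<omega>. c i * X (\<pi> i) \<omega>) {..<p}"
    using indep_vars_compose2[OF indep_vars_reindex[OF indep_X, of \<pi>],
        where Y="\<lambda>i x. c i * x" and N="\<lambda>_. borel"] \<pi>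
    by (simp add: bij_betw_def)
  have "sets (vimage_algebra (space M) (\<lambda>\<omega>. h (\<lambda>i\<in>{..<p}. X i \<omega>)) ?D)
      \<subseteq> sets (vimage_algebra (space M) (\<lambda>\<omega>. \<lambda>i\<in>{..<p}. X i \<omega>) ?D)"
    using h by (intro sets_vimage_algebra_comp_subset Pi_I measurable_space[OF measurable_design])
  moreover have "(\<lambda>\<omega>. h (\<lambda>i\<in>{..<p}. X i \<omega>)) = (\<lambda>\<omega>. \<lambda>i\<in>{..<p}. c i * X (\<pi> i) \<omega>)"
    by (simp add: fun_eq_iff h_def \<pi>_lt)
  ultimately have indep_\<epsilon>: "indep_set (sets (vimage_algebra (space M) (\<lambda>\<omega>. \<lambda>i\<in>{..<p}. c i * X (\<pi> i) \<omega>) ?D))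
      (sets (vimage_algebra (space M) \<epsilon> N))"
    by (intro indep_set_mono_left[OF indep_X_\<epsilon>]) simp
  show ?thesis
    using distr_iid_pair[OF _ indep normal measurable_\<epsilon> indep_\<epsilon>]
      distr_iid_pair[OF _ indep_X std_normal_X measurable_\<epsilon> indep_X_\<epsilon>] p by (simp add: lessThan_empty_iff)
qed

lemma integral_signed_perm_design:
  fixes G :: "(nat \<Rightarrow> real) \<times> 'e \<Rightarrow> real"
  assumes "0 < p" and "bij_betw \<pi> {..<p} {..<p}" and "\<And>i. i < p \<Longrightarrow> c i = 1 \<or> c i = -1"
    and G: "G \<in> borel_measurable (PiM {..<p} (\<lambda>_. borel) \<Otimes>\<^sub>M N)"
  shows "(\<integral>\<omega>. G (\<lambda>i\<in>{..<p}. c i * X (\<pi> i) \<omega>, \<epsilon> \<omega>) \<partial>M) = (\<integral>\<omega>. G (\<lambda>i\<in>{..<p}. X i \<omega>, \<epsilon> \<omega>) \<partial>M)"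
proof -
  have \<pi>_lt: "\<pi> i < p" if "i < p" for i using assms(2) that by (auto simp: bij_betw_def)
  let ?D = "PiM {..<p} (\<lambda>_. borel :: real measure) \<Otimes>\<^sub>M N"
  have signed: "(\<lambda>\<omega>. \<lambda>i\<in>{..<p}. c i * X (\<pi> i) \<omega>) \<in> measurable M (PiM {..<p} (\<lambda>_. borel))"
    using measurable_X \<pi>_lt by (intro measurable_restrict) auto
  have "(\<integral>\<omega>. G (\<lambda>i\<in>{..<p}. c i * X (\<pi> i) \<omega>, \<epsilon> \<omega>) \<partial>M)
      = integral\<^sup>L (distr M ?D (\<lambda>\<omega>. (\<lambda>i\<in>{..<p}. c i * X (\<pi> i) \<omega>, \<epsilon> \<omega>))) G"
    by (rule integral_distr[symmetric, OF measurable_Pair[OF signed measurable_\<epsilon>] G])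
  also have "\<dots> = integral\<^sup>L (distr M ?D (\<lambda>\<omega>. (\<lambda>i\<in>{..<p}. X i \<omega>, \<epsilon> \<omega>))) G"
    using distr_signed_perm_design[OF assms(1-3)] by simp
  also have "\<dots> = (\<integral>\<omega>. G (\<lambda>i\<in>{..<p}. X i \<omega>, \<epsilon> \<omega>) \<partial>M)"
    by (rule integral_distr[OF measurable_Pair[OF measurable_design measurable_\<epsilon>] G])
  finally show ?thesis .
qed

lemma set_integral_response_signed_perm:
  assumes \<pi>: "bij_betw \<pi> {..<p} {..<p}" and c: "\<And>i. i < p \<Longrightarrow> c i = 1 \<or> c i = -1"
    and fix_\<beta>: "\<And>i. i < p \<Longrightarrow> c i * \<beta> i = \<beta> (\<pi> i)" and j: "j < p"
    and A: "A \<in> sets (vimage_algebra (space M) (response \<beta>) borel)"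
  shows "(\<integral>\<omega>\<in>A. X j \<omega> \<partial>M) = (\<integral>\<omega>\<in>A. c j * X (\<pi> j) \<omega> \<partial>M)"
proof -
  obtain B where B: "B \<in> sets borel" and A_eq: "A = response \<beta> -` B \<inter> space M"
    using A by (auto simp: sets_vimage_algebra2)
  have set_integral_eq: "(\<integral>\<omega>\<in>A. g \<omega> \<partial>M) = (\<integral>\<omega>. indicator B (response \<beta> \<omega>) * g \<omega> \<partial>M)"
    for g :: "'a \<Rightarrow> real"
    unfolding set_lebesgue_integral_def A_eq
    by (rule Bochner_Integration.integral_cong) (auto simp: indicator_def)
  define G where "G = (\<lambda>(x, e). indicator B (f (\<Sum>i<p. x i * \<beta> i) e) * x j :: real)"
  have "G \<in> borel_measurable (PiM {..<p} (\<lambda>_. borel) \<Otimes>\<^sub>M N)"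
    unfolding G_def using B by measurable (simp add: j)
  then have invariant: "(\<integral>\<omega>. G (\<lambda>i\<in>{..<p}. X i \<omega>, \<epsilon> \<omega>) \<partial>M)
      = (\<integral>\<omega>. G (\<lambda>i\<in>{..<p}. c i * X (\<pi> i) \<omega>, \<epsilon> \<omega>) \<partial>M)"
    using j \<pi> c by (intro integral_signed_perm_design[symmetric]) auto
  have "(\<integral>\<omega>. indicator B (response \<beta> \<omega>) * X j \<omega> \<partial>M) = (\<integral>\<omega>. G (\<lambda>i\<in>{..<p}. X i \<omega>, \<epsilon> \<omega>) \<partial>M)"
    using j by (simp add: G_def response_def index_def)
  also have "\<dots> = (\<integral>\<omega>. G (\<lambda>i\<in>{..<p}. c i * X (\<pi> i) \<omega>, \<epsilon> \<omega>) \<partial>M)"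
    by (rule invariant)
  also have "\<dots> = (\<integral>\<omega>. indicator B (response \<beta> \<omega>) * (c j * X (\<pi> j) \<omega>) \<partial>M)"
  proof -
    have "(\<Sum>i<p. c i * X (\<pi> i) \<omega> * \<beta> i) = index \<beta> \<omega>" for \<omega>
      using sum_signed_perm[of \<pi> p c \<beta> "\<lambda>i. X i \<omega>"] \<pi> fix_\<beta> by (simp add: index_def)
    then show ?thesis using j by (simp add: G_def response_def)
  qed
  finally show ?thesis by (simp only: set_integral_eq)
qed

lemma cond_exp_signed_perm:
  assumes "bij_betw \<pi> {..<p} {..<p}" and "\<And>i. i < p \<Longrightarrow> c i = 1 \<or> c i = -1"
    and "\<And>i. i < p \<Longrightarrow> c i * \<beta> i = \<beta> (\<pi> i)" and j: "j < p"
  shows "AE \<omega> in M. cond_exp_given M (response \<beta>) (X j) \<omega>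
      = c j * cond_exp_given M (response \<beta>) (X (\<pi> j)) \<omega>"
proof -
  let ?F = "vimage_algebra (space M) (response \<beta>) borel"
  interpret F: sigma_finite_subalgebra M ?F
    by (rule sigma_finite_subalgebra_vimage_algebra[OF measurable_response])
  have \<pi>j: "\<pi> j < p" using assms(1) j by (auto simp: bij_betw_def)
  note integrable = std_normal_moments(1)[OF std_normal_X]
  show ?thesis
    unfolding cond_exp_given_def
  proof (rule F.real_cond_exp_charact)
    fix A assume A: "A \<in> sets ?F"
    have "(\<integral>\<omega>\<in>A. X j \<omega> \<partial>M) = c j * (\<integral>\<omega>\<in>A. X (\<pi> j) \<omega> \<partial>M)"
      using set_integral_response_signed_perm[OF assms A] by simp
    also have "\<dots> = c j * (\<integral>\<omega>\<in>A. real_cond_exp M ?F (X (\<pi> j)) \<omega> \<partial>M)"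
      using F.real_cond_exp_intA[OF integrable[OF \<pi>j] A] by simp
    finally show "(\<integral>\<omega>\<in>A. X j \<omega> \<partial>M) = (\<integral>\<omega>\<in>A. c j * real_cond_exp M ?F (X (\<pi> j)) \<omega> \<partial>M)"
      by simp
  qed (use integrable[OF j] F.real_cond_exp_int(1)[OF integrable[OF \<pi>j]] in auto)
qed

lemma cond_exp_vanishes_off_support:
  assumes "j < p" and "\<beta> j = 0"
  shows "AE \<omega> in M. cond_exp_given M (response \<beta>) (X j) \<omega> = 0"
proof -
  define c :: "nat \<Rightarrow> real" where "c i = (if i = j then -1 else 1)" for i
  have "AE \<omega> in M. cond_exp_given M (response \<beta>) (X j) \<omega>
      = c j * cond_exp_given M (response \<beta>) (X (id j)) \<omega>"
    using assms by (intro cond_exp_signed_perm) (auto simp: c_def bij_betw_def)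
  then show ?thesis by eventually_elim (simp add: c_def)
qed

lemma cond_exp_weighted_eq:
  assumes j: "j < p" and k: "k < p" and abs_eq: "\<bar>\<beta> j\<bar> = \<bar>\<beta> k\<bar>"
  shows "AE \<omega> in M. \<beta> j * cond_exp_given M (response \<beta>) (X j) \<omega>
      = \<beta> k * cond_exp_given M (response \<beta>) (X k) \<omega>"
proof -
  define \<sigma> :: real where "\<sigma> = (if \<beta> j = \<beta> k then 1 else -1)"
  have \<sigma>: "\<sigma> * \<beta> j = \<beta> k" "\<sigma> * \<beta> k = \<beta> j" using abs_eq by (auto simp: \<sigma>_def abs_if split: if_splits)
  define \<pi> where "\<pi> = (\<lambda>i. if i = j then k else if i = k then j else i)"
  define c where "c = (\<lambda>i. if i = j \<or> i = k then \<sigma> else 1)"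
  have "AE \<omega> in M. cond_exp_given M (response \<beta>) (X j) \<omega>
      = c j * cond_exp_given M (response \<beta>) (X (\<pi> j)) \<omega>"
  proof (rule cond_exp_signed_perm[OF _ _ _ j])
    show "bij_betw \<pi> {..<p} {..<p}" by (rule bij_betwI[where g = \<pi>]) (auto simp: \<pi>_def j k)
    show "c i = 1 \<or> c i = -1" for i by (simp add: c_def \<sigma>_def)
    show "c i * \<beta> i = \<beta> (\<pi> i)" for i using \<sigma> by (simp add: c_def \<pi>_def)
  qed
  then show ?thesis
  proof eventually_elim
    case (elim \<omega>)
    then have "\<beta> j * cond_exp_given M (response \<beta>) (X j) \<omega>
        = (\<sigma> * \<beta> j) * cond_exp_given M (response \<beta>) (X k) \<omega>"
      by (simp add: c_def \<pi>_def mult_ac)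
    then show ?case using \<sigma> by simp
  qed
qed

lemma cond_exp_index:
  "AE \<omega> in M. cond_exp_given M (response \<beta>) (index \<beta>) \<omega>
      = (\<Sum>i<p. \<beta> i * cond_exp_given M (response \<beta>) (X i) \<omega>)"
proof -
  let ?F = "vimage_algebra (space M) (response \<beta>) borel"
  interpret F: sigma_finite_subalgebra M ?F
    by (rule sigma_finite_subalgebra_vimage_algebra[OF measurable_response])
  define g where "g i \<omega> = (if i < p then \<beta> i * X i \<omega> else 0)" for i \<omega>
  have index_eq: "index \<beta> = (\<lambda>\<omega>. \<Sum>i<p. g i \<omega>)" by (simp add: fun_eq_iff index_def g_def mult.commute)
  have "integrable M (g i)" for i
    using std_normal_moments(1)[OF std_normal_X] by (cases "i < p") (simp_all add: g_def[abs_def])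
  then have sum: "AE \<omega> in M. real_cond_exp M ?F (\<lambda>\<omega>. \<Sum>i<p. g i \<omega>) \<omega> = (\<Sum>i<p. real_cond_exp M ?F (g i) \<omega>)"
    by (rule F.real_cond_exp_sum)
  have cmult: "AE \<omega> in M. \<forall>i\<in>{..<p}. real_cond_exp M ?F (g i) \<omega> = \<beta> i * real_cond_exp M ?F (X i) \<omega>"
  proof (rule eventually_ball_finite[OF finite_lessThan], rule ballI)
    fix i assume "i \<in> {..<p}"
    then show "AE \<omega> in M. real_cond_exp M ?F (g i) \<omega> = \<beta> i * real_cond_exp M ?F (X i) \<omega>"
      using F.real_cond_exp_cmult[OF std_normal_moments(1)[OF std_normal_X], of i "\<beta> i"]
      by (simp add: g_def[abs_def])
  qed
  show ?thesis
    unfolding cond_exp_given_def index_eq using sum cmult by eventually_elim simp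
qed

lemma Var_cond_exp_index_eq:
  assumes j: "j < p" "\<beta> j \<noteq> 0" and same_abs: "\<And>i. i < p \<Longrightarrow> \<beta> i \<noteq> 0 \<Longrightarrow> \<bar>\<beta> i\<bar> = \<bar>\<beta> j\<bar>"
  shows "Var M (cond_exp_given M (response \<beta>) (index \<beta>))
      = (real (card {i. i < p \<and> \<beta> i \<noteq> 0}) * \<beta> j)\<^sup>2 * Var M (cond_exp_given M (response \<beta>) (X j))"
proof -
  let ?S = "{i. i < p \<and> \<beta> i \<noteq> 0}" and ?m = "\<lambda>i. cond_exp_given M (response \<beta>) (X i)"
  have "AE \<omega> in M. \<forall>i\<in>?S. \<beta> i * ?m i \<omega> = \<beta> j * ?m j \<omega>"
  proof (rule eventually_ball_finite, simp, rule ballI)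
    fix i assume "i \<in> ?S"
    then show "AE \<omega> in M. \<beta> i * ?m i \<omega> = \<beta> j * ?m j \<omega>"
      using j same_abs[of i] by (intro cond_exp_weighted_eq) auto
  qed
  then have "AE \<omega> in M. cond_exp_given M (response \<beta>) (index \<beta>) \<omega> = (real (card ?S) * \<beta> j) * ?m j \<omega>"
    using cond_exp_index[of \<beta>]
  proof eventually_elim
    case (elim \<omega>)
    have "(\<Sum>i<p. \<beta> i * ?m i \<omega>) = (\<Sum>i\<in>?S. \<beta> i * ?m i \<omega>)"
      by (intro sum.mono_neutral_right) auto
    also have "\<dots> = (\<Sum>i\<in>?S. \<beta> j * ?m j \<omega>)" using elim(1) by (intro sum.cong) auto
    finally show ?case using elim(2) by simp
  qed
  then have "Var M (cond_exp_given M (response \<beta>) (index \<beta>)) = Var M (\<lambda>\<omega>. (real (card ?S) * \<beta> j) * ?m j \<omega>)"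
    by (rule Var_cong_AE) (simp_all add: cond_exp_given_def)
  then show ?thesis by (simp add: Var_cmult)
qed

lemma Var_cond_exp_vanishes_off_support:
  assumes "j < p" and "\<beta> j = 0"
  shows "Var M (cond_exp_given M (response \<beta>) (X j)) = 0"
proof -
  have "Var M (cond_exp_given M (response \<beta>) (X j)) = Var M (\<lambda>_. 0)"
    using cond_exp_vanishes_off_support[of j \<beta>, OF assms] by (rule Var_cong_AE) (simp_all add: cond_exp_given_def)
  then show ?thesis by (simp add: Var_def)
qed

lemma Var_cond_exp_index_le_one:
  assumes "(\<Sum>i<p. (\<beta> i)\<^sup>2) = 1"
  shows "Var M (cond_exp_given M (response \<beta>) (index \<beta>)) \<le> 1"
  using Var_real_cond_exp_le_second_moment[OF sigma_finite_subalgebra_vimage_algebra[OF measurable_response]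
      std_normal_moments(1,2)[OF std_normal_index[OF assms]]]
    std_normal_moments(3)[OF std_normal_index[OF assms]]
  by (simp add: cond_exp_given_def)

end

theorem lemma1:
  fixes M :: "'a measure" and N :: "'e measure"
    and X :: "nat \<Rightarrow> 'a \<Rightarrow> real" and \<epsilon> :: "'a \<Rightarrow> 'e"
    and f :: "real \<Rightarrow> 'e \<Rightarrow> real" and \<beta> :: "nat \<Rightarrow> real"
    and p s :: nat and A :: real
  assumes "prob_space M"
    and "\<And>j. j < p \<Longrightarrow> distributed M lborel (X j) std_normal_density"
    and "prob_space.indep_vars M (\<lambda>_. borel) X {..<p}"
    and "\<epsilon> \<in> measurable M N"
    and "prob_space.indep_set M
           (sets (vimage_algebra (space M) (\<lambda>\<omega>. \<lambda>j\<in>{..<p}. X j \<omega>) (PiM {..<p} (\<lambda>_. borel))))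
           (sets (vimage_algebra (space M) \<epsilon> N))"
    and "(\<lambda>(z, e). f z e) \<in> borel_measurable (borel \<Otimes>\<^sub>M N)"
    and "0 < A"
    and "in_F A p s M N X f \<epsilon> \<beta>"
  defines "Y \<equiv> (\<lambda>\<omega>. f (\<Sum>j<p. X j \<omega> * \<beta> j) (\<epsilon> \<omega>))"
  shows "(\<forall>j<p. \<beta> j \<noteq> 0 \<longrightarrow>
            A / real s \<le> Var M (cond_exp_given M Y (X j)) \<and>
            Var M (cond_exp_given M Y (X j)) \<le> 1 / real s) \<and>
         (\<forall>j<p. \<beta> j = 0 \<longrightarrow> Var M (cond_exp_given M Y (X j)) = 0)"
proof -
  interpret gaussian_single_index M N X \<epsilon> f p
    using assms(1-6) by (simp add: gaussian_single_index_def gaussian_single_index_axioms_def)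
  have Y: "Y = response \<beta>" by (simp add: Y_def fun_eq_iff response_def index_def)
  have lower: "\<And>Z. distributed M lborel Z std_normal_density \<Longrightarrow> Z \<in> borel_measurable M \<Longrightarrow>
        indep_set (sets (vimage_algebra (space M) Z borel)) (sets (vimage_algebra (space M) \<epsilon> N)) \<Longrightarrow>
        A \<le> Var M (cond_exp_given M (\<lambda>\<omega>. f (Z \<omega>) (\<epsilon> \<omega>)) Z)"
    and card: "card {j. j < p \<and> \<beta> j \<noteq> 0} = s"
    and sign: "\<forall>j<p. \<beta> j \<noteq> 0 \<longrightarrow> \<beta> j = 1 / sqrt (real s) \<or> \<beta> j = - 1 / sqrt (real s)"
    using assms(8) unfolding in_F_def by auto
  have "A / real s \<le> Var M (cond_exp_given M Y (X j)) \<and> Var M (cond_exp_given M Y (X j)) \<le> 1 / real s"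
    if j: "j < p" "\<beta> j \<noteq> 0" for j
  proof -
    note unit = unit_sign_vector[OF card sign j]
    have "A \<le> Var M (cond_exp_given M Y (index \<beta>))"
      using lower[OF std_normal_index[OF unit(2)] measurable_index indep_set_index_\<epsilon>]
      by (simp add: Y response_def[abs_def])
    moreover have "Var M (cond_exp_given M Y (index \<beta>)) \<le> 1"
      unfolding Y using Var_cond_exp_index_le_one[OF unit(2)] .
    moreover have "Var M (cond_exp_given M Y (index \<beta>)) = real s * Var M (cond_exp_given M Y (X j))"
      using Var_cond_exp_index_eq[of j \<beta>, OF j unit(3)] unit(4) card by (simp add: Y)
    ultimately show ?thesis using unit(1) by (simp add: pos_divide_le_eq pos_le_divide_eq mult.commute)
  qed
  moreover have "Var M (cond_exp_given M Y (X j)) = 0" if "j < p" "\<beta> j = 0" for j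
    unfolding Y using that by (rule Var_cond_exp_vanishes_off_support)
  ultimately show ?thesis by blast
qed

end
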